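(* Let $\mathcal{C}$ be an $[n,k]_q$ MWS code such that for every $c\in\mathcal{C}\setminus\{0\}$ the entries of $V(c)$ are pairwise distinct. Then for each $i\in\{1,\dots,q-1\}$ there exists a non-zero $r=(r_1,\dots,r_{q-1})\in\mathbb{N}^{q-1}$ such that $$\sum_{j=1}^{q-1} r_j\left(a[\alpha^{i-j}]-b[\alpha^{i-j}]\right)\neq 0\quad\text{for all } a,b\in\mathcal{C},\ a\ne b.$$
   Context: $\alpha$ is a fixed primitive element of $\mathbb{F}_q$ (exponents modulo $q-1$), $\mathbb{N}=\{0,1,2,\dots\}$. An $[n,k]_q$ code is a $k$-dimensional subspace of $\mathbb{F}_q^n$ (non-degenerate if $k\ge2$); it is MWS if it has exactly $\frac{q^k-1}{q-1}$ distinct non-zero Hamming weights. For $c\in\mathbb{F}_q^n$, $\beta\in\mathbb{F}_q$, $c[\beta]=|\{l:c_l=\beta\}|$ and $V(c)=(c[\alpha],\dots,c[\alpha^{q-1}],c[0])$. *)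

theory Defs
  imports "HOL-Analysis.Analysis"
begin

definition primitive_elem :: "'a::{finite,field} \<Rightarrow> bool" where
  "primitive_elem \<alpha> \<longleftrightarrow> \<alpha> \<noteq> 0 \<and> (\<forall>x. x \<noteq> 0 \<longrightarrow> (\<exists>j::nat. x = \<alpha> ^ j))"

definition apow :: "'a::{finite,field} \<Rightarrow> int \<Rightarrow> 'a" where
  "apow \<alpha> e = \<alpha> ^ nat (e mod int (CARD('a) - 1))"

definition cnt :: "'a ^ 'n::finite \<Rightarrow> 'a \<Rightarrow> nat" where
  "cnt c \<beta> = card {l. c $ l = \<beta>}"

definition Vvec :: "'a::{finite,field} \<Rightarrow> 'a ^ 'n::finite \<Rightarrow> nat list" where
  "Vvec \<alpha> c = map (\<lambda>j. cnt c (\<alpha> ^ j)) [1..<CARD('a)] @ [cnt c 0]"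

definition hweight :: "'a::zero ^ 'n::finite \<Rightarrow> nat" where
  "hweight c = card {l. c $ l \<noteq> 0}"

definition lin_code :: "('a::{finite,field} ^ 'n::finite) set \<Rightarrow> nat \<Rightarrow> bool" where
  "lin_code C k \<longleftrightarrow> vec.subspace C \<and> vec.dim C = k"

definition MWS :: "('a::{finite,field} ^ 'n::finite) set \<Rightarrow> nat \<Rightarrow> bool" where
  "MWS C k \<longleftrightarrow> card {hweight c | c. c \<in> C \<and> c \<noteq> 0 \<and> hweight c \<noteq> 0}
      = (CARD('a) ^ k - 1) div (CARD('a) - 1)"

end

theory Submission
  imports Defs
begin

text \<open>In an MWS code there are as many weights of non-zero codewords as there are
  one-dimensional subspaces, and each weight class contains the \<open>q - 1\<close> non-zero multiples
  of any of its members; so two non-zero codewords of equal weight are proportional. Two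
  distinct codewords with the same counts \<open>c[\<beta>]\<close>, \<open>\<beta> \<noteq> 0\<close>, have equal weight, hence
  \<open>b = \<alpha>^e a\<close> with \<open>0 < e < q - 1\<close>, and then \<open>a[\<alpha>^(e+1)] = a[\<alpha>]\<close> contradicts
  distinctness of \<open>V(a)\<close>. Hence a codeword is determined by the counts
  \<open>c[\<alpha>^(i-j)]\<close>, \<open>j = 1, \<dots>, q - 1\<close>, and with \<open>r\<^sub>j = (n + 1)^j\<close> the sum in question is a
  base-\<open>(n + 1)\<close> expansion whose digits, differences of counts, have absolute value at
  most \<open>n\<close>; it vanishes only if all digits do.\<close>

lemma card_nonzero_field: "card {x::'a::{finite,field}. x \<noteq> 0} = CARD('a) - 1"
proof -
  have "{x::'a. x \<noteq> 0} = UNIV - {0}" by auto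
  then show ?thesis by (simp add: card_Diff_singleton)
qed

lemma card_field_minus_one_pos: "0 < CARD('a::{finite,field}) - 1"
proof -
  have "card {x::'a. x \<noteq> 0} > 0" by (subst card_gt_0_iff) (auto intro: exI[of _ 1])
  then show ?thesis by (simp add: card_nonzero_field)
qed

lemma field_power_card_minus_one:
  fixes x :: "'a::{finite,field}"
  assumes "x \<noteq> 0"
  shows "x ^ (CARD('a) - 1) = 1"
proof -
  let ?U = "{y::'a. y \<noteq> 0}"
  have "prod id ?U = prod (\<lambda>y. x * y) ?U"
    by (rule prod.reindex_bij_witness[of _ "\<lambda>y. x * y" "\<lambda>y. y / x"]) (use assms in auto)
  also have "\<dots> = x ^ card ?U * prod id ?U" by (simp add: prod.distrib)
  finally have "x ^ card ?U = 1" by simp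
  then show ?thesis by (simp add: card_nonzero_field)
qed

lemma primitive_elem_power_less:
  fixes \<alpha> :: "'a::{finite,field}"
  assumes "primitive_elem \<alpha>" and "x \<noteq> 0"
  obtains e where "e < CARD('a) - 1" and "x = \<alpha> ^ e"
proof -
  let ?m = "CARD('a) - 1"
  obtain j where j: "x = \<alpha> ^ j" using assms unfolding primitive_elem_def by auto
  have "\<alpha> ^ j = (\<alpha> ^ ?m) ^ (j div ?m) * \<alpha> ^ (j mod ?m)"
    by (metis power_add power_mult div_mult_mod_eq mult.commute)
  also have "\<dots> = \<alpha> ^ (j mod ?m)"
    using assms(1) field_power_card_minus_one[of \<alpha>] unfolding primitive_elem_def by simp
  finally show ?thesis
    using that[of "j mod ?m"] j card_field_minus_one_pos[where 'a='a] by simp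
qed

lemma nonzero_eq_apow_shift:
  fixes \<alpha> :: "'a::{finite,field}"
  assumes "primitive_elem \<alpha>" and "\<beta> \<noteq> 0"
  shows "\<exists>j\<in>{1..CARD('a) - 1}. \<beta> = apow \<alpha> (int i - int j)"
proof -
  define m where "m = CARD('a) - 1"
  have m: "m > 0" using card_field_minus_one_pos[where 'a='a] by (simp add: m_def)
  obtain e where e: "e < m" "\<beta> = \<alpha> ^ e"
    using primitive_elem_power_less[OF assms] unfolding m_def by blast
  define j where "j = nat ((int i - int e - 1) mod int m) + 1"
  have "0 \<le> (int i - int e - 1) mod int m" "(int i - int e - 1) mod int m < int m"
    using m by simp_all
  then have j: "j \<in> {1..m}" and j_int: "int j = (int i - int e - 1) mod int m + 1"
    unfolding j_def by (auto simp: nat_less_iff)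
  have "(int i - int j) mod int m = (int i - 1 - (int i - int e - 1) mod int m) mod int m"
    by (simp add: j_int algebra_simps)
  also have "\<dots> = (int i - 1 - (int i - int e - 1)) mod int m"
    by (rule mod_diff_right_eq)
  also have "\<dots> = int e" using e(1) by simp
  finally have "apow \<alpha> (int i - int j) = \<beta>"
    using e(2) by (simp add: apow_def m_def)
  then show ?thesis using j unfolding m_def by metis
qed

lemma cnt_le_card: "cnt (c::'a^'n::finite) \<beta> \<le> CARD('n)"
  unfolding cnt_def by (rule card_mono) auto

lemma cnt_scale:
  fixes c :: "'a::field^'n::finite"
  assumes "t \<noteq> 0"
  shows "cnt (t *s c) (t * \<beta>) = cnt c \<beta>"
  unfolding cnt_def using assms by simp

lemma hweight_scale:
  fixes c :: "'a::field^'n::finite"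
  assumes "t \<noteq> 0"
  shows "hweight (t *s c) = hweight c"
  unfolding hweight_def using assms by simp

lemma hweight_eq_0_iff: "hweight (c::'a::zero^'n::finite) = 0 \<longleftrightarrow> c = 0"
  unfolding hweight_def by (simp add: vec_eq_iff)

lemma hweight_eq_sum_cnt:
  fixes c :: "'a::{finite,field}^'n::finite"
  shows "hweight c = (\<Sum>\<beta>\<in>{\<beta>. \<beta> \<noteq> 0}. cnt c \<beta>)"
proof -
  have "{l. c $ l \<noteq> 0} = (\<Union>\<beta>\<in>{\<beta>. \<beta> \<noteq> 0}. {l. c $ l = \<beta>})" by auto
  then show ?thesis
    unfolding hweight_def cnt_def by (simp only:) (rule card_UN_disjoint, auto)
qed

lemma card_subspace:
  fixes C :: "('a::{finite,field}^'n::finite) set"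
  assumes "vec.subspace C"
  shows "card C = CARD('a) ^ vec.dim C"
proof -
  obtain B where B: "B \<subseteq> C" "vec.independent B" "C \<subseteq> vec.span B" "card B = vec.dim C"
    by (rule vec.basis_exists)
  define g where "g u = (\<Sum>v\<in>B. u v *s v)" for u :: "'a^'n \<Rightarrow> 'a"
  have span: "vec.span B = C" using B(1,3) vec.span_minimal[OF B(1) assms] by blast
  have "g ` PiE B (\<lambda>_. UNIV) = C"
  proof
    show "g ` PiE B (\<lambda>_. UNIV) \<subseteq> C"
      using span vec.span_finite[of B] by (auto simp: g_def)
    show "C \<subseteq> g ` PiE B (\<lambda>_. UNIV)"
    proof
      fix c assume "c \<in> C"
      then obtain u where "c = g u" using span vec.span_finite[of B] by (auto simp: g_def)
      moreover have "g (restrict u B) = g u" unfolding g_def by (rule sum.cong) auto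
      moreover have "restrict u B \<in> PiE B (\<lambda>_. UNIV)" by simp
      ultimately show "c \<in> g ` PiE B (\<lambda>_. UNIV)" by (metis image_eqI)
    qed
  qed
  moreover have "inj_on g (PiE B (\<lambda>_. UNIV))"
  proof (rule inj_onI)
    fix u w assume u: "u \<in> PiE B (\<lambda>_. UNIV)" and w: "w \<in> PiE B (\<lambda>_. UNIV)" and "g u = g w"
    then have dep: "(\<Sum>v\<in>B. (u v - w v) *s v) = 0"
      unfolding g_def by (simp add: vec.scale_left_diff_distrib sum_subtractf)
    have "\<forall>c. (\<Sum>v\<in>B. c v *s v) = 0 \<longrightarrow> (\<forall>v\<in>B. c v = 0)"
      using B(2) unfolding vec.independent_explicit by blast
    from spec[OF this, of "\<lambda>v. u v - w v"] dep have "\<forall>v\<in>B. u v - w v = 0" by simp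
    then show "u = w" using u w by (auto intro: PiE_ext)
  qed
  ultimately have "card C = card (PiE B (\<lambda>_. UNIV :: 'a set))"
    by (metis card_image)
  then show ?thesis using B(4) by (simp add: card_PiE)
qed

lemma card_nonzero_multiples:
  fixes x :: "'a::{finite,field}^'n::finite"
  assumes "x \<noteq> 0"
  shows "card ((\<lambda>t. t *s x) ` {t. t \<noteq> 0}) = CARD('a) - 1"
proof -
  have "inj_on (\<lambda>t. t *s x) {t. t \<noteq> 0}"
    by (rule inj_onI) (use assms vec.scale_right_imp_eq in blast)
  then show ?thesis by (simp add: card_image card_nonzero_field)
qed

lemma minus_one_dvd_power_minus_one: "q - 1 dvd q ^ k - (1::nat)"
proof (cases "q = 0")
  case False
  then have "int (q ^ k - 1) = (int q - 1) * (\<Sum>i<k. int q ^ i)"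
    by (simp add: of_nat_diff power_diff_1_eq)
  then have "int (q - 1) dvd int (q ^ k - 1)" using False by (simp add: of_nat_diff)
  then show ?thesis by (simp only: int_dvd_int_iff)
qed (simp add: power_0_left)

lemma card_fibre_eq_if_card_le:
  assumes "finite S"
    and fibres: "\<forall>x\<in>S. m \<le> card {y\<in>S. f y = f x}"
    and "card S \<le> m * card (f ` S)"
    and "x \<in> S"
  shows "card {y\<in>S. f y = f x} = m"
proof (rule ccontr)
  let ?F = "\<lambda>w. {y\<in>S. f y = w}"
  assume "card (?F (f x)) \<noteq> m"
  then have "m < card (?F (f x))" using fibres \<open>x \<in> S\<close> by force
  then have "(\<Sum>w\<in>f ` S. m) < (\<Sum>w\<in>f ` S. card (?F w))"
    using fibres \<open>x \<in> S\<close> \<open>finite S\<close> by (intro sum_strict_mono_ex1) auto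
  also have "\<dots> = card (\<Union>w\<in>f ` S. ?F w)"
    using \<open>finite S\<close> by (intro card_UN_disjoint[symmetric]) auto
  also have "(\<Union>w\<in>f ` S. ?F w) = S" by auto
  finally show False using assms(3) by (simp add: mult.commute)
qed

lemma MWS_equal_hweight_imp_multiple:
  fixes C :: "('a::{finite,field}^'n::finite) set"
  assumes "lin_code C k" and "MWS C k"
    and "a \<in> C" "b \<in> C" "a \<noteq> 0" "b \<noteq> 0" and "hweight a = hweight b"
  shows "\<exists>t. t \<noteq> 0 \<and> b = t *s a"
proof -
  let ?m = "CARD('a) - 1"
  let ?S = "C - {0}"
  let ?L = "\<lambda>x. (\<lambda>t. t *s x) ` {t. t \<noteq> 0}"
  have sub: "vec.subspace C" and dim: "vec.dim C = k" using assms(1) unfolding lin_code_def by auto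
  have line_in_fibre: "?L x \<subseteq> {y\<in>?S. hweight y = hweight x}" if "x \<in> ?S" for x
    using that vec.subspace_scale[OF sub] by (auto simp: hweight_scale)
  have "card ?S = CARD('a) ^ k - 1"
    using card_subspace[OF sub] dim vec.subspace_0[OF sub] by (simp add: card_Diff_singleton)
  moreover have "{hweight c | c. c \<in> C \<and> c \<noteq> 0 \<and> hweight c \<noteq> 0} = hweight ` ?S"
    by (auto simp: hweight_eq_0_iff)
  then have "card (hweight ` ?S) = (CARD('a) ^ k - 1) div ?m"
    using assms(2) unfolding MWS_def by simp
  ultimately have le: "card ?S \<le> ?m * card (hweight ` ?S)"
    using minus_one_dvd_power_minus_one[of "CARD('a)" k] by simp
  have ge: "\<forall>x\<in>?S. ?m \<le> card {y\<in>?S. hweight y = hweight x}"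
  proof
    fix x assume x: "x \<in> ?S"
    then have "card (?L x) \<le> card {y\<in>?S. hweight y = hweight x}"
      using line_in_fibre by (intro card_mono) auto
    then show "?m \<le> card {y\<in>?S. hweight y = hweight x}"
      using x card_nonzero_multiples[of x] by simp
  qed
  have fibre: "card {y\<in>?S. hweight y = hweight a} = ?m"
    using card_fibre_eq_if_card_le[OF _ ge le] assms(3,5) by simp
  have "?L a = {y\<in>?S. hweight y = hweight a}"
    using assms(3,5) line_in_fibre fibre card_nonzero_multiples[OF assms(5)]
    by (intro card_subset_eq) auto
  then show ?thesis using assms(4,6,7) by auto
qed

lemma distinct_Vvec_scale_same_counts_imp_one:
  fixes \<alpha> :: "'a::{finite,field}" and c :: "'a^'n::finite"
  assumes "primitive_elem \<alpha>" and "distinct (Vvec \<alpha> c)" and "t \<noteq> 0"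
    and same: "\<forall>\<beta>. \<beta> \<noteq> 0 \<longrightarrow> cnt (t *s c) \<beta> = cnt c \<beta>"
  shows "t = 1"
proof -
  obtain e where e: "e < CARD('a) - 1" "t = \<alpha> ^ e"
    using primitive_elem_power_less[OF assms(1,3)] by blast
  have "\<alpha> \<noteq> 0" using assms(1) unfolding primitive_elem_def by simp
  then have "cnt c (\<alpha> ^ (e + 1)) = cnt (t *s c) (t * \<alpha>)"
    using same e(2) by (simp add: mult.commute)
  also have "\<dots> = cnt c (\<alpha> ^ 1)" using cnt_scale[OF assms(3)] by simp
  finally have eq: "(\<lambda>j. cnt c (\<alpha> ^ j)) (e + 1) = (\<lambda>j. cnt c (\<alpha> ^ j)) 1" .
  have inj: "inj_on (\<lambda>j. cnt c (\<alpha> ^ j)) {1..<CARD('a)}"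
    using assms(2) unfolding Vvec_def by (simp add: distinct_map)
  have "e + 1 \<in> {1..<CARD('a)}" "1 \<in> {1..<CARD('a)}"
    using e(1) card_field_minus_one_pos[where 'a='a] by auto
  then have "e + 1 = 1" by (rule inj_onD[OF inj eq])
  then show ?thesis using e(2) by simp
qed

lemma distinct_Vvec_MWS_same_counts_imp_eq:
  fixes \<alpha> :: "'a::{finite,field}" and C :: "('a ^ 'n::finite) set"
  assumes "primitive_elem \<alpha>" and "lin_code C k" and "MWS C k"
    and "\<forall>c\<in>C. c \<noteq> 0 \<longrightarrow> distinct (Vvec \<alpha> c)"
    and "a \<in> C" "b \<in> C"
    and same: "\<forall>\<beta>. \<beta> \<noteq> 0 \<longrightarrow> cnt a \<beta> = cnt b \<beta>"
  shows "a = b"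
proof -
  have weight: "hweight a = hweight b" using same by (simp add: hweight_eq_sum_cnt)
  show ?thesis
  proof (cases "a = 0")
    case True
    then show ?thesis using weight hweight_eq_0_iff by metis
  next
    case False
    then have "b \<noteq> 0" using weight hweight_eq_0_iff by metis
    then obtain t where t: "t \<noteq> 0" "b = t *s a"
      using MWS_equal_hweight_imp_multiple assms(2,3,5,6) False weight by blast
    moreover have "\<forall>\<beta>. \<beta> \<noteq> 0 \<longrightarrow> cnt (t *s a) \<beta> = cnt a \<beta>" using same t(2) by simp
    ultimately have "t = 1"
      using distinct_Vvec_scale_same_counts_imp_one[OF assms(1)] assms(4,5) False by blast
    then show ?thesis using t(2) by simp
  qed
qed

lemma abs_sum_base_powers_less:
  fixes N :: int and d :: "nat \<Rightarrow> int"
  assumes "0 < N" and "\<forall>j\<in>{1..m}. \<bar>d j\<bar> < N"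
  shows "\<bar>\<Sum>j=1..m. N ^ j * d j\<bar> < N ^ Suc m"
  using assms(2)
proof (induction m)
  case 0
  then show ?case using assms(1) by simp
next
  case (Suc m)
  have "\<bar>d (Suc m)\<bar> < N" using Suc.prems by simp
  then have "\<bar>d (Suc m)\<bar> \<le> N - 1" by linarith
  then have "\<bar>N ^ Suc m * d (Suc m)\<bar> \<le> N ^ Suc m * (N - 1)"
    using assms(1) by (simp add: abs_mult mult_left_mono)
  moreover have "\<bar>\<Sum>j=1..m. N ^ j * d j\<bar> < N ^ Suc m" using Suc by simp
  ultimately have "\<bar>\<Sum>j=1..Suc m. N ^ j * d j\<bar> < N ^ Suc m + N ^ Suc m * (N - 1)"
    using abs_triangle_ineq[of "\<Sum>j=1..m. N ^ j * d j" "N ^ Suc m * d (Suc m)"] by simp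
  then show ?case by (simp add: algebra_simps)
qed

lemma sum_base_powers_eq_0_imp:
  fixes N :: int and d :: "nat \<Rightarrow> int"
  assumes "\<forall>j\<in>{1..m}. \<bar>d j\<bar> < N" and "(\<Sum>j=1..m. N ^ j * d j) = 0"
  shows "\<forall>j\<in>{1..m}. d j = 0"
  using assms
proof (induction m)
  case 0
  then show ?case by simp
next
  case (Suc m)
  let ?s = "\<Sum>j=1..m. N ^ j * d j"
  have digits: "\<forall>j\<in>{1..m}. \<bar>d j\<bar> < N" and top: "\<bar>d (Suc m)\<bar> < N"
    using Suc.prems(1) by simp_all
  then have "0 < N" by linarith
  have s: "?s = - (N ^ Suc m * d (Suc m))" using Suc.prems(2) by simp
  have "N ^ Suc m * \<bar>d (Suc m)\<bar> = \<bar>?s\<bar>" using s \<open>0 < N\<close> by (simp add: abs_mult)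
  also have "\<dots> < N ^ Suc m * 1"
    using abs_sum_base_powers_less[OF \<open>0 < N\<close> digits] by simp
  finally have "\<bar>d (Suc m)\<bar> < 1" by (rule mult_left_less_imp_less) (use \<open>0 < N\<close> in simp)
  then have last: "d (Suc m) = 0" by (simp add: abs_less_iff)
  then have "\<forall>j\<in>{1..m}. d j = 0" using Suc.IH[OF digits] s by simp
  then show ?case using last by (auto simp: le_Suc_eq)
qed

lemma MWS_distinct_Vvec_weighted_count_difference_nonzero:
  fixes \<alpha> :: "'a::{finite,field}" and C :: "('a ^ 'n::finite) set"
  assumes "primitive_elem \<alpha>" and "lin_code C k" and "MWS C k"
    and "\<forall>c\<in>C. c \<noteq> 0 \<longrightarrow> distinct (Vvec \<alpha> c)"
    and "a \<in> C" "b \<in> C" "a \<noteq> b"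
  shows "(\<Sum>j=1..CARD('a) - 1. int (Suc CARD('n) ^ j) *
            (int (cnt a (apow \<alpha> (int i - int j))) - int (cnt b (apow \<alpha> (int i - int j))))) \<noteq> 0"
proof -
  define d where "d j = int (cnt a (apow \<alpha> (int i - int j))) - int (cnt b (apow \<alpha> (int i - int j)))"
    for j
  have bound: "\<forall>j\<in>{1..CARD('a) - 1}. \<bar>d j\<bar> < int (Suc CARD('n))"
  proof
    fix j
    have "cnt a (apow \<alpha> (int i - int j)) \<le> CARD('n)" "cnt b (apow \<alpha> (int i - int j)) \<le> CARD('n)"
      by (rule cnt_le_card)+
    then show "\<bar>d j\<bar> < int (Suc CARD('n))" by (simp add: d_def abs_if)
  qed
  have "\<exists>j\<in>{1..CARD('a) - 1}. d j \<noteq> 0"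
  proof (rule ccontr)
    assume digits_zero: "\<not> (\<exists>j\<in>{1..CARD('a) - 1}. d j \<noteq> 0)"
    have "cnt a \<beta> = cnt b \<beta>" if nonzero: "\<beta> \<noteq> 0" for \<beta>
    proof -
      obtain j where "j \<in> {1..CARD('a) - 1}" "\<beta> = apow \<alpha> (int i - int j)"
        using nonzero_eq_apow_shift[OF assms(1) nonzero] by blast
      then show ?thesis using digits_zero by (simp add: d_def)
    qed
    then show False using distinct_Vvec_MWS_same_counts_imp_eq[OF assms(1-6)] assms(7) by blast
  qed
  then have "(\<Sum>j=1..CARD('a) - 1. int (Suc CARD('n)) ^ j * d j) \<noteq> 0"
    using sum_base_powers_eq_0_imp[OF bound] by blast
  then show ?thesis by (simp add: d_def)
qed

theorem mainTheorem7:
  fixes \<alpha> :: "'a::{finite,field}" and C :: "('a ^ 'n::finite) set" and k :: nat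
  assumes "primitive_elem \<alpha>"
    and "lin_code C k"
    and "MWS C k"
    and "\<forall>c\<in>C. c \<noteq> 0 \<longrightarrow> distinct (Vvec \<alpha> c)"
  shows "\<forall>i\<in>{1..CARD('a) - 1}. \<exists>r::nat \<Rightarrow> nat. (\<exists>j\<in>{1..CARD('a) - 1}. r j \<noteq> 0) \<and>
     (\<forall>a\<in>C. \<forall>b\<in>C. a \<noteq> b \<longrightarrow>
        (\<Sum>j=1..CARD('a) - 1. int (r j) *
            (int (cnt a (apow \<alpha> (int i - int j))) - int (cnt b (apow \<alpha> (int i - int j))))) \<noteq> 0)"
proof
  fix i
  have "1 \<in> {1..CARD('a) - 1}" using card_field_minus_one_pos[where 'a='a] by simp
  then show "\<exists>r::nat \<Rightarrow> nat. (\<exists>j\<in>{1..CARD('a) - 1}. r j \<noteq> 0) \<and>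
     (\<forall>a\<in>C. \<forall>b\<in>C. a \<noteq> b \<longrightarrow>
        (\<Sum>j=1..CARD('a) - 1. int (r j) *
            (int (cnt a (apow \<alpha> (int i - int j))) - int (cnt b (apow \<alpha> (int i - int j))))) \<noteq> 0)"
    using MWS_distinct_Vvec_weighted_count_difference_nonzero[OF assms]
    by (intro exI[of _ "\<lambda>j. Suc CARD('n) ^ j"] conjI bexI[of _ 1]) auto
qed

end
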